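(* Let $\pi \in S_{n+1}$ have no fixed points. Then $\pi$ has no stretching pairs if and only if there exists $\ell \in [n]$ such that $\mathrm{Exc}(\pi) = \{1,\dots,\ell\}$.
   Context: For $\pi \in S_{n+1}$, $\mathrm{Exc}(\pi) = \{i \in [n] : \pi(i) > i\}$ is the excedance set. A pair $1\le i<j\le n+1$ is a stretching pair of $\pi$ if $\pi(i) < i < j < \pi(j)$. *)

theory Defs
  imports "HOL-Combinatorics.Permutations"
begin

text \<open>Permutations of [n+1] = {1..n+1} are functions p with p permutes {1..n+1}.\<close>

definition exc :: "nat \<Rightarrow> (nat \<Rightarrow> nat) \<Rightarrow> nat set" where
  "exc n p = {i \<in> {1..n}. p i > i}"

definition stretching_pair :: "nat \<Rightarrow> (nat \<Rightarrow> nat) \<Rightarrow> nat \<Rightarrow> nat \<Rightarrow> bool" where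
  "stretching_pair n p i j \<longleftrightarrow> 1 \<le> i \<and> i < j \<and> j \<le> n + 1 \<and> p i < i \<and> j < p j"

end

theory Submission
  imports Defs
begin

text \<open>For a derangement every non-excedance i satisfies p i < i, and p (n+1) \<le> n+1, so a
  stretching pair is exactly an excedance j preceded by a non-excedance i. Hence there are no
  stretching pairs iff Exc is closed downwards; as 1 is always an excedance, this means that Exc
  is an initial interval.\<close>

lemma down_closed_iff_initial_interval:
  fixes A :: "nat set"
  assumes "A \<subseteq> {1..n}" and "1 \<in> A"
  shows "(\<forall>i j. j \<in> A \<longrightarrow> 1 \<le> i \<longrightarrow> i < j \<longrightarrow> i \<in> A) \<longleftrightarrow> (\<exists>l\<in>{1..n}. A = {1..l})"
proof
  assume down: "\<forall>i j. j \<in> A \<longrightarrow> 1 \<le> i \<longrightarrow> i < j \<longrightarrow> i \<in> A"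
  have fin: "finite A"
    using assms(1) finite_subset by blast
  define l where "l = Max A"
  have "l \<in> A"
    unfolding l_def using fin assms(2) Max_in by blast
  have "A = {1..l}"
  proof
    show "A \<subseteq> {1..l}"
      using assms(1) fin l_def by auto
    show "{1..l} \<subseteq> A"
    proof
      fix i assume "i \<in> {1..l}"
      then show "i \<in> A"
        using down \<open>l \<in> A\<close> by (cases "i = l") auto
    qed
  qed
  moreover have "l \<in> {1..n}"
    using \<open>l \<in> A\<close> assms(1) by blast
  ultimately show "\<exists>l\<in>{1..n}. A = {1..l}"
    by blast
qed auto

lemma derangement_one_in_exc:
  assumes "p permutes {1..n+1}" and "\<forall>i\<in>{1..n+1}. p i \<noteq> i"
  shows "1 \<in> exc n p"
proof -
  have "p 1 \<in> {1..n+1}"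
    using assms(1) permutes_in_image by fastforce
  moreover have "p 1 \<noteq> 1"
    using assms(2) by simp
  ultimately have "1 < p 1" and "p 1 \<le> n + 1"
    by auto
  then show ?thesis
    unfolding exc_def by simp
qed

lemma permutes_last_not_excedance:
  fixes p :: "nat \<Rightarrow> nat"
  assumes "p permutes {1..n+1}"
  shows "p (n + 1) \<le> n + 1"
  using permutes_in_image[OF assms, of "n + 1"] by simp

lemma derangement_no_stretching_pair_iff_exc_down_closed:
  assumes "p permutes {1..n+1}" and "\<forall>i\<in>{1..n+1}. p i \<noteq> i"
  shows "(\<not> (\<exists>i j. stretching_pair n p i j)) \<longleftrightarrow>
    (\<forall>i j. j \<in> exc n p \<longrightarrow> 1 \<le> i \<longrightarrow> i < j \<longrightarrow> i \<in> exc n p)"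
proof -
  have "stretching_pair n p i j \<longleftrightarrow> j \<in> exc n p \<and> 1 \<le> i \<and> i < j \<and> i \<notin> exc n p" for i j
  proof
    assume s: "stretching_pair n p i j"
    then have "j \<noteq> n + 1"
      using permutes_last_not_excedance[OF assms(1)] unfolding stretching_pair_def by auto
    with s show "j \<in> exc n p \<and> 1 \<le> i \<and> i < j \<and> i \<notin> exc n p"
      unfolding stretching_pair_def exc_def by auto
  next
    assume "j \<in> exc n p \<and> 1 \<le> i \<and> i < j \<and> i \<notin> exc n p"
    moreover from this have "p i \<noteq> i"
      using assms(2) unfolding exc_def by auto
    ultimately show "stretching_pair n p i j"
      unfolding stretching_pair_def exc_def by auto
  qed
  then show ?thesis
    by blast
qed

theorem mainTheorem7:
  fixes n :: nat and p :: "nat \<Rightarrow> nat"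
  assumes "p permutes {1..n+1}"
    and "\<forall>i\<in>{1..n+1}. p i \<noteq> i"
  shows "(\<not> (\<exists>i j. stretching_pair n p i j)) \<longleftrightarrow> (\<exists>l\<in>{1..n}. exc n p = {1..l})"
proof -
  have "exc n p \<subseteq> {1..n}"
    unfolding exc_def by blast
  from down_closed_iff_initial_interval[OF this derangement_one_in_exc[OF assms]]
  show ?thesis
    unfolding derangement_no_stretching_pair_iff_exc_down_closed[OF assms] .
qed

end
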